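(* Let $Q$ be a polyhedral partially ordered abelian group, $M$ a $Q$-module, and $\tau,\tau'$ faces of $Q_+$. Then $(\Gamma_{\tau'}M)_\tau=\Gamma_{\tau'}(M_\tau)$, and both sides are $0$ unless $\tau'\supseteq\tau$.
   Context: A partially ordered abelian group is an abelian group $Q$ generated by a submonoid $Q_+$ whose only unit is $0$; $q\preceq q'$ iff $q'-q\in Q_+$. A face is a submonoid $\sigma\subseteq Q_+$ with $Q_+\setminus\sigma$ an ideal of $Q_+$; $Q$ is polyhedral if it has finitely many faces. A $Q$-module is a $Q$-graded module over $k[Q_+]$ ($k$ a field). For a face $\tau$, $\mathbb Z\tau$ is the subgroup generated by $\tau$ and the localization along $\tau$ is $M_\tau=M\otimes_{k[Q_+]}k[Q_++\mathbb Z\tau]$. The submodule globally supported on $\tau'$ is $\Gamma_{\tau'}M=\bigcap_{\tau''\not\subseteq\tau'}\ker(M\to M_{\tau''})$, over faces $\tau''$ not contained in $\tau'$. *)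

theory Defs
  imports Main
begin

definition po_group :: "'q::ab_group_add set \<Rightarrow> bool" where
  "po_group Qp \<longleftrightarrow>
     0 \<in> Qp \<and> (\<forall>a\<in>Qp. \<forall>b\<in>Qp. a + b \<in> Qp) \<and>
     (\<forall>a\<in>Qp. - a \<in> Qp \<longrightarrow> a = 0) \<and>
     (\<forall>x. \<exists>a\<in>Qp. \<exists>b\<in>Qp. x = a - b)"

definition face :: "'q::ab_group_add set \<Rightarrow> 'q set \<Rightarrow> bool" where
  "face Qp \<sigma> \<longleftrightarrow>
     \<sigma> \<subseteq> Qp \<and> 0 \<in> \<sigma> \<and> (\<forall>a\<in>\<sigma>. \<forall>b\<in>\<sigma>. a + b \<in> \<sigma>) \<and>
     (\<forall>a\<in>Qp - \<sigma>. \<forall>b\<in>Qp. a + b \<in> Qp - \<sigma>)"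

definition polyhedral :: "'q::ab_group_add set \<Rightarrow> bool" where
  "polyhedral Qp \<longleftrightarrow> finite {\<sigma>. face Qp \<sigma>}"

text \<open>A Q-module (Q-graded k[Q_+]-module) is given degreewise: for each degree q a
  k-vector space (mcar q, mzero q, madd q, msmul q), and for a in Q_+ the action
  of the monomial x^a as a map mact a q : M_q \<rightarrow> M_(q+a).\<close>

record ('q, 'k, 'v) qmod =
  mcar  :: "'q \<Rightarrow> 'v set"
  mzero :: "'q \<Rightarrow> 'v"
  madd  :: "'q \<Rightarrow> 'v \<Rightarrow> 'v \<Rightarrow> 'v"
  msmul :: "'q \<Rightarrow> 'k \<Rightarrow> 'v \<Rightarrow> 'v"
  mact  :: "'q \<Rightarrow> 'q \<Rightarrow> 'v \<Rightarrow> 'v"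

definition qmodule :: "'q::ab_group_add set \<Rightarrow> ('q, 'k::field, 'v, 'z) qmod_scheme \<Rightarrow> bool" where
  "qmodule Qp M \<longleftrightarrow>
    (\<forall>q. let V = mcar M q; z = mzero M q; p = madd M q; s = msmul M q in
       z \<in> V \<and>
       (\<forall>x\<in>V. \<forall>y\<in>V. p x y \<in> V) \<and>
       (\<forall>c. \<forall>x\<in>V. s c x \<in> V) \<and>
       (\<forall>x\<in>V. \<forall>y\<in>V. \<forall>w\<in>V. p (p x y) w = p x (p y w)) \<and>
       (\<forall>x\<in>V. \<forall>y\<in>V. p x y = p y x) \<and>
       (\<forall>x\<in>V. p z x = x) \<and>
       (\<forall>x\<in>V. \<exists>y\<in>V. p x y = z) \<and>
       (\<forall>x\<in>V. s 1 x = x) \<and>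
       (\<forall>c d. \<forall>x\<in>V. s c (s d x) = s (c * d) x) \<and>
       (\<forall>c d. \<forall>x\<in>V. s (c + d) x = p (s c x) (s d x)) \<and>
       (\<forall>c. \<forall>x\<in>V. \<forall>y\<in>V. s c (p x y) = p (s c x) (s c y))) \<and>
    (\<forall>q. \<forall>a\<in>Qp. \<forall>x\<in>mcar M q. mact M a q x \<in> mcar M (q + a)) \<and>
    (\<forall>q. \<forall>x\<in>mcar M q. mact M 0 q x = x) \<and>
    (\<forall>q. \<forall>a\<in>Qp. \<forall>b\<in>Qp. \<forall>x\<in>mcar M q.
        mact M b (q + a) (mact M a q x) = mact M (a + b) q x) \<and>
    (\<forall>q. \<forall>a\<in>Qp. \<forall>x\<in>mcar M q. \<forall>y\<in>mcar M q.
        mact M a q (madd M q x y) = madd M (q + a) (mact M a q x) (mact M a q y)) \<and>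
    (\<forall>q. \<forall>a\<in>Qp. \<forall>c. \<forall>x\<in>mcar M q.
        mact M a q (msmul M q c x) = msmul M (q + a) c (mact M a q x))"

text \<open>M_tau = M \<otimes> k[Q_+ + Z tau], i.e. monomials x^t (t in tau) are inverted.
  Its degree-q part consists of fractions m / x^t with t in tau and m in M_(q+t);
  m/x^t = m'/x^t' iff x^(s+t') m = x^(s+t) m' for some s in tau.
  Fractions are represented as equivalence classes of pairs (t, m).\<close>

definition loc_cls :: "'q::ab_group_add set \<Rightarrow> ('q, 'k, 'v, 'z) qmod_scheme \<Rightarrow> 'q \<Rightarrow> 'q \<Rightarrow> 'v \<Rightarrow> ('q \<times> 'v) set" where
  "loc_cls \<tau> M q t m =
     {(t', m'). t' \<in> \<tau> \<and> m' \<in> mcar M (q + t') \<and>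
        (\<exists>s\<in>\<tau>. mact M (s + t') (q + t) m = mact M (s + t) (q + t') m')}"

definition loc_car :: "'q::ab_group_add set \<Rightarrow> ('q, 'k, 'v, 'z) qmod_scheme \<Rightarrow> 'q \<Rightarrow> ('q \<times> 'v) set set" where
  "loc_car \<tau> M q = {loc_cls \<tau> M q t m | t m. t \<in> \<tau> \<and> m \<in> mcar M (q + t)}"

definition rep :: "('q \<times> 'v) set \<Rightarrow> 'q \<times> 'v" where
  "rep X = (SOME p. p \<in> X)"

definition loc :: "'q::ab_group_add set \<Rightarrow> ('q, 'k::field, 'v, 'z) qmod_scheme \<Rightarrow> ('q, 'k, ('q \<times> 'v) set) qmod" where
  "loc \<tau> M =
    \<lparr> mcar = loc_car \<tau> M,
      mzero = (\<lambda>q. loc_cls \<tau> M q 0 (mzero M q)),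
      madd = (\<lambda>q X Y. case rep X of (t, m) \<Rightarrow> case rep Y of (t', m') \<Rightarrow>
                 loc_cls \<tau> M q (t + t')
                   (madd M (q + (t + t')) (mact M t' (q + t) m) (mact M t (q + t') m'))),
      msmul = (\<lambda>q c X. case rep X of (t, m) \<Rightarrow> loc_cls \<tau> M q t (msmul M (q + t) c m)),
      mact = (\<lambda>a q X. case rep X of (t, m) \<Rightarrow> loc_cls \<tau> M (q + a) t (mact M a (q + t) m)) \<rparr>"

text \<open>The natural map N_tau \<rightarrow> M_tau induced by a submodule N \<subseteq> M (same operations,
  smaller carriers): the class of (t, m) in N_tau goes to the class of (t, m) in M_tau.\<close>
definition loc_map :: "'q::ab_group_add set \<Rightarrow> ('q, 'k, 'v, 'z) qmod_scheme \<Rightarrow> 'q \<Rightarrow> ('q \<times> 'v) set \<Rightarrow> ('q \<times> 'v) set" where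
  "loc_map \<tau> M q X = (case rep X of (t, m) \<Rightarrow> loc_cls \<tau> M q t m)"

text \<open>Gamma_tau' M = intersection over faces tau'' not contained in tau' of the kernels
  of the localization maps M \<rightarrow> M_tau'', m \<mapsto> m/1.\<close>
definition Gamma :: "'q::ab_group_add set \<Rightarrow> 'q set \<Rightarrow> ('q, 'k, 'v, 'z) qmod_scheme \<Rightarrow> ('q, 'k, 'v, 'z) qmod_scheme" where
  "Gamma Qp \<tau>' M = M\<lparr> mcar := (\<lambda>q. {m \<in> mcar M q. \<forall>\<tau>''. face Qp \<tau>'' \<and> \<not> \<tau>'' \<subseteq> \<tau>' \<longrightarrow>
        loc_cls \<tau>'' M q 0 m = loc_cls \<tau>'' M q 0 (mzero M q)}) \<rparr>"

end

theory Submission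
  imports Defs
begin

text \<open>Gamma_tau' M consists of the elements killed, for every face sigma not contained
  in tau', by some monomial x^s with s in sigma. A fraction m/x^t lies in Gamma_tau'(M_tau)
  iff for each such sigma some x^(u + v) with u in sigma and v in tau kills m. Since there
  are only finitely many faces, the v's multiply to a single x^w with w in tau, and
  x^w m/x^(t + w) is a fraction with numerator in Gamma_tau' M. As localization is exact,
  (Gamma_tau' M)_tau is thereby identified with Gamma_tau'(M_tau). If tau is not contained
  in tau', then tau is itself one of the faces sigma, so Gamma_tau' M is killed by
  monomials that become invertible in M_tau, and both sides vanish.\<close>

lemma face_subset: "face Qp \<sigma> \<Longrightarrow> \<sigma> \<subseteq> Qp"
  unfolding face_def by blast

lemma face_zero: "face Qp \<sigma> \<Longrightarrow> 0 \<in> \<sigma>"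
  unfolding face_def by blast

lemma face_add: "face Qp \<sigma> \<Longrightarrow> a \<in> \<sigma> \<Longrightarrow> b \<in> \<sigma> \<Longrightarrow> a + b \<in> \<sigma>"
  unfolding face_def by blast

lemma face_sum:
  assumes "face Qp \<sigma>" and "finite S" and "\<And>x. x \<in> S \<Longrightarrow> f x \<in> \<sigma>"
  shows "sum f S \<in> \<sigma>"
  using assms(2,3) by (induction S rule: finite_induct) (auto intro: face_zero face_add assms(1))

lemma loc_simps [simp]:
  "mcar (loc \<tau> M) = loc_car \<tau> M"
  "mzero (loc \<tau> M) q = loc_cls \<tau> M q 0 (mzero M q)"
  unfolding loc_def by simp_all

lemma mact_loc:
  "mact (loc \<tau> M) a q X = (case rep X of (t, m) \<Rightarrow> loc_cls \<tau> M (q + a) t (mact M a (q + t) m))"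
  unfolding loc_def by simp_all

lemma loc_cls_subobject:
  assumes "mact N = mact M" and "\<And>p. mcar N p \<subseteq> mcar M p"
  shows "loc_cls \<tau> N q t m = loc_cls \<tau> M q t m \<inter> {(t', m'). m' \<in> mcar N (q + t')}"
  using assms unfolding loc_cls_def by auto

definition torsion :: "'q::ab_group_add set set \<Rightarrow> ('q, 'k, 'v, 'z) qmod_scheme \<Rightarrow> ('q, 'k, 'v, 'z) qmod_scheme" where
  "torsion F M = M\<lparr>mcar := \<lambda>q. {m \<in> mcar M q. \<forall>\<sigma>\<in>F. \<exists>s\<in>\<sigma>. mact M s q m = mzero M (q + s)}\<rparr>"

lemma torsion_simps [simp]:
  "mcar (torsion F M) q = {m \<in> mcar M q. \<forall>\<sigma>\<in>F. \<exists>s\<in>\<sigma>. mact M s q m = mzero M (q + s)}"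
  "mact (torsion F M) = mact M"
  "mzero (torsion F M) = mzero M"
  unfolding torsion_def by simp_all

text \<open>Localizations and Gamma only involve the monomial action and the zero elements,
  not addition or scalars, so this is all that is assumed of a module.\<close>
locale graded_action =
  fixes Qp :: "'q::ab_group_add set" and M :: "('q, 'k::field, 'v, 'z) qmod_scheme"
  assumes add_closed: "a \<in> Qp \<Longrightarrow> b \<in> Qp \<Longrightarrow> a + b \<in> Qp"
    and act_closed: "a \<in> Qp \<Longrightarrow> x \<in> mcar M q \<Longrightarrow> mact M a q x \<in> mcar M (q + a)"
    and act_0: "x \<in> mcar M q \<Longrightarrow> mact M 0 q x = x"
    and act_act: "a \<in> Qp \<Longrightarrow> b \<in> Qp \<Longrightarrow> x \<in> mcar M q \<Longrightarrow>
      mact M b (q + a) (mact M a q x) = mact M (a + b) q x"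
    and mzero_closed: "mzero M q \<in> mcar M q"
    and act_mzero: "a \<in> Qp \<Longrightarrow> mact M a q (mzero M q) = mzero M (q + a)"

lemma qmodule_graded_action:
  assumes "po_group Qp" and "qmodule Qp M"
  shows "graded_action Qp M"
proof
  show "a + b \<in> Qp" if "a \<in> Qp" "b \<in> Qp" for a b
    using assms(1) that unfolding po_group_def by blast
  note Q = assms(2)[unfolded qmodule_def Let_def]
  show "mact M a q x \<in> mcar M (q + a)" if "a \<in> Qp" "x \<in> mcar M q" for a q x
    using Q that by blast
  show "mact M 0 q x = x" if "x \<in> mcar M q" for q x
    using Q that by blast
  show "mact M b (q + a) (mact M a q x) = mact M (a + b) q x"
    if "a \<in> Qp" "b \<in> Qp" "x \<in> mcar M q" for a b q x
    using Q that by blast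
  show z: "mzero M q \<in> mcar M q" for q
    using Q by blast
  show "mact M a q (mzero M q) = mzero M (q + a)" if a: "a \<in> Qp" for a q
  proof -
    txt \<open>x^a is additive, so x^a 0 is an idempotent of the group M_(q+a).\<close>
    let ?p = "madd M (q + a)" and ?z = "mzero M (q + a)"
    define y where "y = mact M a q (mzero M q)"
    have y: "y \<in> mcar M (q + a)"
      unfolding y_def using Q a z by blast
    have yy: "?p y y = y"
      unfolding y_def using Q a z by (metis (no_types, lifting))
    obtain y' where y': "y' \<in> mcar M (q + a)" "?p y y' = ?z"
      using Q y by meson
    have "?z = ?p (?p y y) y'" using yy y' by simp
    also have "\<dots> = ?p y ?z" using Q y y' by metis
    also have "\<dots> = y" using Q y z by metis
    finally show ?thesis unfolding y_def by simp
  qed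
qed

context graded_action
begin

lemma act_act_eq:
  "a \<in> Qp \<Longrightarrow> b \<in> Qp \<Longrightarrow> x \<in> mcar M q \<Longrightarrow> q' = q + a \<Longrightarrow> c = a + b \<Longrightarrow>
    mact M b q' (mact M a q x) = mact M c q x"
  using act_act by blast

lemma act_commute:
  "a \<in> Qp \<Longrightarrow> b \<in> Qp \<Longrightarrow> x \<in> mcar M q \<Longrightarrow> q' = q + a \<Longrightarrow> q'' = q + b \<Longrightarrow>
    mact M b q' (mact M a q x) = mact M a q'' (mact M b q x)"
  using act_act by (metis add.commute)

lemma act_closed_eq: "a \<in> Qp \<Longrightarrow> x \<in> mcar M q \<Longrightarrow> q' = q + a \<Longrightarrow> mact M a q x \<in> mcar M q'"
  using act_closed by blast

lemma act_mzero_eq: "a \<in> Qp \<Longrightarrow> q' = q + a \<Longrightarrow> mact M a q (mzero M q) = mzero M q'"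
  using act_mzero by blast

lemma mzero_torsion:
  assumes "F \<subseteq> Collect (face Qp)"
  shows "mzero M q \<in> mcar (torsion F M) q"
proof -
  have "\<exists>s\<in>\<sigma>. mact M s q (mzero M q) = mzero M (q + s)" if "\<sigma> \<in> F" for \<sigma>
  proof
    show "0 \<in> \<sigma>" using that assms face_zero by blast
  qed (simp add: act_0 mzero_closed)
  then show ?thesis
    using mzero_closed by simp
qed

lemma graded_action_torsion:
  assumes F: "F \<subseteq> Collect (face Qp)"
  shows "graded_action Qp (torsion F M)"
proof
  fix a q x assume a: "a \<in> Qp" and x: "x \<in> mcar (torsion F M) q"
  have "\<exists>s\<in>\<sigma>. mact M s (q + a) (mact M a q x) = mzero M (q + a + s)" if \<sigma>: "\<sigma> \<in> F" for \<sigma>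
  proof -
    obtain s where s: "s \<in> \<sigma>" and e: "mact M s q x = mzero M (q + s)"
      using x \<sigma> by auto
    have "face Qp \<sigma>" using \<sigma> F by blast
    then have sQ: "s \<in> Qp" using s face_subset by blast
    have "mact M s (q + a) (mact M a q x) = mact M a (q + s) (mact M s q x)"
      by (rule act_commute) (use a sQ x in auto)
    also have "\<dots> = mzero M (q + a + s)"
      unfolding e by (rule act_mzero_eq) (use a in \<open>auto simp: algebra_simps\<close>)
    finally show ?thesis using s by blast
  qed
  then show "mact (torsion F M) a q x \<in> mcar (torsion F M) (q + a)"
    using act_closed[OF a] x by auto
next
  fix q show "mzero (torsion F M) q \<in> mcar (torsion F M) q"
    using mzero_torsion[OF F] by simp
qed (simp_all add: add_closed act_0 act_act act_mzero)

context
  fixes \<tau> assumes \<tau>: "face Qp \<tau>"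
begin

lemma face_in_Qp: "s \<in> \<tau> \<Longrightarrow> s \<in> Qp"
  using face_subset[OF \<tau>] by blast

lemma loc_cls_refl: "t \<in> \<tau> \<Longrightarrow> m \<in> mcar M (q + t) \<Longrightarrow> (t, m) \<in> loc_cls \<tau> M q t m"
  unfolding loc_cls_def using face_zero[OF \<tau>] by auto

lemma loc_cls_sym:
  "(t', m') \<in> loc_cls \<tau> M q t m \<Longrightarrow> t \<in> \<tau> \<Longrightarrow> m \<in> mcar M (q + t) \<Longrightarrow>
    (t, m) \<in> loc_cls \<tau> M q t' m'"
  unfolding loc_cls_def by (auto, metis)

lemma loc_cls_trans:
  assumes "(t', m') \<in> loc_cls \<tau> M q t m" and "(t'', m'') \<in> loc_cls \<tau> M q t' m'"
    and t: "t \<in> \<tau>" and m: "m \<in> mcar M (q + t)"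
  shows "(t'', m'') \<in> loc_cls \<tau> M q t m"
proof -
  obtain s where t': "t' \<in> \<tau>" and m': "m' \<in> mcar M (q + t')" and s: "s \<in> \<tau>"
    and e1: "mact M (s + t') (q + t) m = mact M (s + t) (q + t') m'"
    using assms(1) unfolding loc_cls_def by auto
  obtain s' where t'': "t'' \<in> \<tau>" and m'': "m'' \<in> mcar M (q + t'')" and s': "s' \<in> \<tau>"
    and e2: "mact M (s' + t'') (q + t') m' = mact M (s' + t') (q + t'') m''"
    using assms(2) unfolding loc_cls_def by auto
  define r where "r = s + s' + t'"
  have r: "r \<in> \<tau>" unfolding r_def using s s' t' face_add[OF \<tau>] by blast
  have Q: "s + t' \<in> Qp" "s + t \<in> Qp" "s' + t'' \<in> Qp" "s' + t' \<in> Qp"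
    using s s' t t' t'' face_add[OF \<tau>] face_in_Qp by auto
  have "mact M (r + t'') (q + t) m = mact M (s' + t'') (q + t + (s + t')) (mact M (s + t') (q + t) m)"
    by (rule act_act_eq[symmetric]) (use Q m in \<open>auto simp: r_def algebra_simps\<close>)
  also have "\<dots> = mact M (s + t) (q + t' + (s' + t'')) (mact M (s' + t'') (q + t') m')"
    unfolding e1 by (rule act_commute) (use Q m' in \<open>auto simp: algebra_simps\<close>)
  also have "\<dots> = mact M (r + t) (q + t'') m''"
    unfolding e2 by (rule act_act_eq) (use Q m'' in \<open>auto simp: r_def algebra_simps\<close>)
  finally show ?thesis unfolding loc_cls_def using r t'' m'' by auto
qed

lemma loc_cls_eq_iff:
  assumes "t \<in> \<tau>" "m \<in> mcar M (q + t)" "t' \<in> \<tau>" "m' \<in> mcar M (q + t')"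
  shows "loc_cls \<tau> M q t m = loc_cls \<tau> M q t' m' \<longleftrightarrow> (t', m') \<in> loc_cls \<tau> M q t m"
proof
  assume "loc_cls \<tau> M q t m = loc_cls \<tau> M q t' m'"
  then show "(t', m') \<in> loc_cls \<tau> M q t m" using loc_cls_refl assms by auto
next
  assume h: "(t', m') \<in> loc_cls \<tau> M q t m"
  have h': "(t, m) \<in> loc_cls \<tau> M q t' m'" using loc_cls_sym[OF h] assms by auto
  show "loc_cls \<tau> M q t m = loc_cls \<tau> M q t' m'"
    using loc_cls_trans[OF h _ assms(1,2)] loc_cls_trans[OF h' _ assms(3,4)] by auto
qed

lemma loc_cls_eq_zero_iff:
  assumes t: "t \<in> \<tau>" and m: "m \<in> mcar M (q + t)"
  shows "loc_cls \<tau> M q t m = loc_cls \<tau> M q 0 (mzero M q) \<longleftrightarrow>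
    (\<exists>u\<in>\<tau>. mact M u (q + t) m = mzero M (q + t + u))"
proof -
  have z: "mzero M q \<in> mcar M (q + 0)" using mzero_closed by simp
  have "mact M (u + t) q (mzero M q) = mzero M (q + t + u)" if "u \<in> \<tau>" for u
    by (rule act_mzero_eq) (use that t face_add[OF \<tau>] face_in_Qp in \<open>auto simp: algebra_simps\<close>)
  then show ?thesis
    unfolding loc_cls_eq_iff[OF t m face_zero[OF \<tau>] z] unfolding loc_cls_def
    using face_zero[OF \<tau>] z by auto
qed

lemma loc_cls_act_eq:
  assumes t: "t \<in> \<tau>" and u: "u \<in> \<tau>" and m: "m \<in> mcar M (q + t)"
  shows "loc_cls \<tau> M q (t + u) (mact M u (q + t) m) = loc_cls \<tau> M q t m"
proof -
  have c: "mact M u (q + t) m \<in> mcar M (q + (t + u))"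
    by (rule act_closed_eq) (use u m face_in_Qp in \<open>auto simp: algebra_simps\<close>)
  have "mact M (0 + t) (q + (t + u)) (mact M u (q + t) m) = mact M (0 + (t + u)) (q + t) m"
    by (rule act_act_eq) (use t u m face_in_Qp in \<open>auto simp: algebra_simps\<close>)
  then have "(t, m) \<in> loc_cls \<tau> M q (t + u) (mact M u (q + t) m)"
    unfolding loc_cls_def using face_zero[OF \<tau>] t m by blast
  then show ?thesis
    using loc_cls_eq_iff[OF face_add[OF \<tau> t u] c t m] by simp
qed

lemma rep_loc_cls: "t \<in> \<tau> \<Longrightarrow> m \<in> mcar M (q + t) \<Longrightarrow> rep (loc_cls \<tau> M q t m) \<in> loc_cls \<tau> M q t m"
  unfolding rep_def by (rule someI) (rule loc_cls_refl)

text \<open>The action on M_tau does not depend on the representative chosen by rep.\<close>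
lemma loc_act_cls:
  assumes a: "a \<in> Qp" and t: "t \<in> \<tau>" and m: "m \<in> mcar M (q + t)"
  shows "mact (loc \<tau> M) a q (loc_cls \<tau> M q t m) = loc_cls \<tau> M (q + a) t (mact M a (q + t) m)"
proof -
  obtain t1 m1 where r: "rep (loc_cls \<tau> M q t m) = (t1, m1)"
    by (cases "rep (loc_cls \<tau> M q t m)")
  have "(t1, m1) \<in> loc_cls \<tau> M q t m" using rep_loc_cls[OF t m] r by simp
  then obtain s where t1: "t1 \<in> \<tau>" and m1: "m1 \<in> mcar M (q + t1)" and s: "s \<in> \<tau>"
    and e: "mact M (s + t1) (q + t) m = mact M (s + t) (q + t1) m1"
    unfolding loc_cls_def by auto
  have c1: "mact M a (q + t1) m1 \<in> mcar M (q + a + t1)"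
    by (rule act_closed_eq[OF a m1]) (simp add: algebra_simps)
  have c: "mact M a (q + t) m \<in> mcar M (q + a + t)"
    by (rule act_closed_eq[OF a m]) (simp add: algebra_simps)
  have Q: "s + t \<in> Qp" "s + t1 \<in> Qp" using s t t1 face_add[OF \<tau>] face_in_Qp by auto
  have "mact M (s + t) (q + a + t1) (mact M a (q + t1) m1) = mact M a (q + t1 + (s + t)) (mact M (s + t) (q + t1) m1)"
    by (rule act_commute) (use Q a m1 in \<open>auto simp: algebra_simps\<close>)
  also have "\<dots> = mact M (s + t1) (q + a + t) (mact M a (q + t) m)"
    unfolding e[symmetric] by (rule act_commute) (use Q a m in \<open>auto simp: algebra_simps\<close>)
  finally have "(t, mact M a (q + t) m) \<in> loc_cls \<tau> M (q + a) t1 (mact M a (q + t1) m1)"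
    unfolding loc_cls_def using s t c by auto
  then show ?thesis
    using loc_cls_eq_iff[OF t1 c1 t c] by (simp add: mact_loc r add.assoc)
qed

lemma graded_action_loc: "graded_action Qp (loc \<tau> M)"
proof
  show "a + b \<in> Qp" if "a \<in> Qp" "b \<in> Qp" for a b
    using that by (rule add_closed)
  fix q
  show "mzero (loc \<tau> M) q \<in> mcar (loc \<tau> M) q"
    unfolding loc_simps loc_car_def using face_zero[OF \<tau>] mzero_closed by force
  show "mact (loc \<tau> M) a q (mzero (loc \<tau> M) q) = mzero (loc \<tau> M) (q + a)" if a: "a \<in> Qp" for a
    using loc_act_cls[OF a face_zero[OF \<tau>], of "mzero M q" q] mzero_closed act_mzero[OF a]
    by simp
  fix X assume "X \<in> mcar (loc \<tau> M) q"
  then obtain t m where t: "t \<in> \<tau>" and m: "m \<in> mcar M (q + t)" and X: "X = loc_cls \<tau> M q t m"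
    unfolding loc_simps loc_car_def by auto
  show "mact (loc \<tau> M) a q X \<in> mcar (loc \<tau> M) (q + a)" if a: "a \<in> Qp" for a
  proof -
    have "mact M a (q + t) m \<in> mcar M (q + a + t)"
      by (rule act_closed_eq[OF a m]) (simp add: algebra_simps)
    then show ?thesis unfolding X loc_act_cls[OF a t m] loc_simps loc_car_def using t by auto
  qed
  show "mact (loc \<tau> M) 0 q X = X"
    unfolding X loc_act_cls[OF face_in_Qp[OF face_zero[OF \<tau>]] t m] using act_0[OF m] by simp
  show "mact (loc \<tau> M) b (q + a) (mact (loc \<tau> M) a q X) = mact (loc \<tau> M) (a + b) q X"
    if a: "a \<in> Qp" and b: "b \<in> Qp" for a b
  proof -
    have c: "mact M a (q + t) m \<in> mcar M (q + a + t)"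
      by (rule act_closed_eq[OF a m]) (simp add: algebra_simps)
    have "mact M b (q + a + t) (mact M a (q + t) m) = mact M (a + b) (q + t) m"
      by (rule act_act_eq) (use a b m in \<open>auto simp: algebra_simps\<close>)
    then show ?thesis
      unfolding X loc_act_cls[OF a t m] loc_act_cls[OF b t c] loc_act_cls[OF add_closed[OF a b] t m]
      by (simp add: add.assoc)
  qed
qed

lemma loc_act_eq_zero_iff:
  assumes u: "u \<in> Qp" and t: "t \<in> \<tau>" and m: "m \<in> mcar M (q + t)"
  shows "mact (loc \<tau> M) u q (loc_cls \<tau> M q t m) = mzero (loc \<tau> M) (q + u) \<longleftrightarrow>
    (\<exists>v\<in>\<tau>. mact M (u + v) (q + t) m = mzero M (q + t + (u + v)))"
proof -
  have c: "mact M u (q + t) m \<in> mcar M (q + u + t)"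
    by (rule act_closed_eq[OF u m]) (simp add: algebra_simps)
  have "mact M v (q + u + t) (mact M u (q + t) m) = mact M (u + v) (q + t) m" if "v \<in> \<tau>" for v
    by (rule act_act_eq) (use u m that face_in_Qp in \<open>auto simp: algebra_simps\<close>)
  moreover have degree: "q + u + t + v = q + t + (u + v)" for v
    by (simp add: algebra_simps)
  ultimately show ?thesis
    unfolding loc_act_cls[OF u t m] loc_simps loc_cls_eq_zero_iff[OF t c] by (simp only: degree) auto
qed

lemma loc_act_eq_zero_imp_zero:
  assumes X: "X \<in> mcar (loc \<tau> M) q" and u: "u \<in> \<tau>"
    and "mact (loc \<tau> M) u q X = mzero (loc \<tau> M) (q + u)"
  shows "X = mzero (loc \<tau> M) q"
proof -
  obtain t m where t: "t \<in> \<tau>" and m: "m \<in> mcar M (q + t)" and X: "X = loc_cls \<tau> M q t m"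
    using assms(1) unfolding loc_simps loc_car_def by auto
  obtain v where "v \<in> \<tau>" "mact M (u + v) (q + t) m = mzero M (q + t + (u + v))"
    using assms(3) loc_act_eq_zero_iff[OF face_in_Qp[OF u] t m] unfolding X by blast
  then show ?thesis
    unfolding X loc_simps loc_cls_eq_zero_iff[OF t m] using face_add[OF \<tau> u] by blast
qed

lemma loc_trivial_if_torsion:
  assumes "\<And>p m. m \<in> mcar M p \<Longrightarrow> \<exists>s\<in>\<tau>. mact M s p m = mzero M (p + s)"
  shows "mcar (loc \<tau> M) q = {mzero (loc \<tau> M) q}"
proof -
  have "X = mzero (loc \<tau> M) q" if X: "X \<in> mcar (loc \<tau> M) q" for X
  proof -
    obtain t m where t: "t \<in> \<tau>" and m: "m \<in> mcar M (q + t)" and X: "X = loc_cls \<tau> M q t m"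
      using X unfolding loc_simps loc_car_def by auto
    show ?thesis
      unfolding X loc_simps loc_cls_eq_zero_iff[OF t m] using assms[OF m] .
  qed
  then show ?thesis
    using graded_action.mzero_closed[OF graded_action_loc] by blast
qed

lemma loc_map_cls:
  assumes sub: "mact N = mact M" "\<And>p. mcar N p \<subseteq> mcar M p"
    and t: "t \<in> \<tau>" and m: "m \<in> mcar N (q + t)"
  shows "loc_map \<tau> M q (loc_cls \<tau> N q t m) = loc_cls \<tau> M q t m"
proof -
  have mM: "m \<in> mcar M (q + t)" using m sub(2) by blast
  obtain t1 m1 where r: "rep (loc_cls \<tau> N q t m) = (t1, m1)"
    by (cases "rep (loc_cls \<tau> N q t m)")
  have "(t, m) \<in> loc_cls \<tau> N q t m"
    unfolding loc_cls_subobject[OF sub] using loc_cls_refl[OF t mM] m by blast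
  then have "rep (loc_cls \<tau> N q t m) \<in> loc_cls \<tau> N q t m"
    unfolding rep_def by (rule someI)
  then have "(t1, m1) \<in> loc_cls \<tau> N q t m"
    unfolding r .
  then have h: "(t1, m1) \<in> loc_cls \<tau> M q t m"
    unfolding loc_cls_subobject[OF sub] by blast
  then have "t1 \<in> \<tau>" "m1 \<in> mcar M (q + t1)"
    unfolding loc_cls_def by auto
  with h have "loc_cls \<tau> M q t m = loc_cls \<tau> M q t1 m1"
    using loc_cls_eq_iff[OF t mM] by blast
  then show ?thesis
    unfolding loc_map_def r by simp
qed

lemma bij_betw_loc_map:
  assumes sub: "mact N = mact M" "\<And>p. mcar N p \<subseteq> mcar M p"
  shows "bij_betw (loc_map \<tau> M q) (mcar (loc \<tau> N) q)
    {loc_cls \<tau> M q t m | t m. t \<in> \<tau> \<and> m \<in> mcar N (q + t)}"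
proof (rule bij_betw_imageI)
  show "inj_on (loc_map \<tau> M q) (mcar (loc \<tau> N) q)"
  proof
    fix X Y assume "X \<in> mcar (loc \<tau> N) q" "Y \<in> mcar (loc \<tau> N) q"
      and e: "loc_map \<tau> M q X = loc_map \<tau> M q Y"
    then obtain t m t' m' where "t \<in> \<tau>" "m \<in> mcar N (q + t)" "X = loc_cls \<tau> N q t m"
      and "t' \<in> \<tau>" "m' \<in> mcar N (q + t')" "Y = loc_cls \<tau> N q t' m'"
      unfolding loc_simps loc_car_def by auto
    with e show "X = Y"
      using loc_map_cls[OF sub] loc_cls_subobject[OF sub] by simp
  qed
  show "loc_map \<tau> M q ` mcar (loc \<tau> N) q =
    {loc_cls \<tau> M q t m | t m. t \<in> \<tau> \<and> m \<in> mcar N (q + t)}"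
    unfolding loc_simps loc_car_def by (auto simp: loc_map_cls[OF sub] intro!: image_eqI) blast
qed

text \<open>The multipliers v from the finitely many faces in F add up to a single w in tau.\<close>
lemma exists_act_in_torsion:
  assumes fin: "finite F" and F: "F \<subseteq> Collect (face Qp)" and m: "m \<in> mcar M p"
    and kill: "\<And>\<sigma>. \<sigma> \<in> F \<Longrightarrow> \<exists>u\<in>\<sigma>. \<exists>v\<in>\<tau>. mact M (u + v) p m = mzero M (p + (u + v))"
  shows "\<exists>w\<in>\<tau>. mact M w p m \<in> mcar (torsion F M) (p + w)"
proof -
  obtain u v where uv: "\<And>\<sigma>. \<sigma> \<in> F \<Longrightarrow> u \<sigma> \<in> \<sigma> \<and> v \<sigma> \<in> \<tau> \<and>
      mact M (u \<sigma> + v \<sigma>) p m = mzero M (p + (u \<sigma> + v \<sigma>))"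
    using kill by metis
  define w where "w = sum v F"
  have w: "w \<in> \<tau>" unfolding w_def using face_sum[OF \<tau> fin] uv by blast
  have "\<exists>s\<in>\<sigma>. mact M s (p + w) (mact M w p m) = mzero M (p + w + s)" if \<sigma>: "\<sigma> \<in> F" for \<sigma>
  proof -
    define w' where "w' = sum v (F - {\<sigma>})"
    have w': "w' \<in> \<tau>" unfolding w'_def using face_sum[OF \<tau>] fin uv by blast
    have ww': "w = v \<sigma> + w'" unfolding w_def w'_def using sum.remove[OF fin \<sigma>] by simp
    have "face Qp \<sigma>" using \<sigma> F by blast
    then have "u \<sigma> \<in> Qp" using uv[OF \<sigma>] face_subset by blast
    moreover have "v \<sigma> \<in> Qp" "w \<in> Qp" "w' \<in> Qp" using uv[OF \<sigma>] w w' face_in_Qp by auto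
    ultimately have Q: "u \<sigma> \<in> Qp" "u \<sigma> + v \<sigma> \<in> Qp" "w \<in> Qp" "w' \<in> Qp"
      using add_closed by auto
    have "mact M (u \<sigma>) (p + w) (mact M w p m) = mact M w' (p + (u \<sigma> + v \<sigma>)) (mact M (u \<sigma> + v \<sigma>) p m)"
      using act_act_eq[OF Q(3,1) m] act_act_eq[OF Q(2,4) m] by (simp add: ww' algebra_simps)
    also have "\<dots> = mzero M (p + w + u \<sigma>)"
      unfolding uv[OF \<sigma>, THEN conjunct2, THEN conjunct2]
      by (rule act_mzero_eq[OF Q(4)]) (simp add: ww' algebra_simps)
    finally show ?thesis using uv[OF \<sigma>] by blast
  qed
  moreover have "mact M w p m \<in> mcar M (p + w)"
    using act_closed face_in_Qp[OF w] m by blast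
  ultimately show ?thesis using w by auto
qed

lemma loc_cls_mem_torsion_iff:
  assumes F: "F \<subseteq> Collect (face Qp)" and t: "t \<in> \<tau>" and m: "m \<in> mcar M (q + t)"
  shows "loc_cls \<tau> M q t m \<in> mcar (torsion F (loc \<tau> M)) q \<longleftrightarrow>
    (\<forall>\<sigma>\<in>F. \<exists>u\<in>\<sigma>. \<exists>v\<in>\<tau>. mact M (u + v) (q + t) m = mzero M (q + t + (u + v)))"
proof -
  have in_loc: "loc_cls \<tau> M q t m \<in> mcar (loc \<tau> M) q"
    unfolding loc_simps loc_car_def using t m by blast
  have act_eq_zero: "mact (loc \<tau> M) u q (loc_cls \<tau> M q t m) = mzero (loc \<tau> M) (q + u) \<longleftrightarrow>
      (\<exists>v\<in>\<tau>. mact M (u + v) (q + t) m = mzero M (q + t + (u + v)))" if "u \<in> \<sigma>" "\<sigma> \<in> F" for u \<sigma>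
  proof -
    have "face Qp \<sigma>" using that(2) F by blast
    then have "u \<in> Qp" using that(1) face_subset by blast
    then show ?thesis by (rule loc_act_eq_zero_iff[OF _ t m])
  qed
  show ?thesis
    unfolding torsion_simps mem_Collect_eq
    by (simp only: in_loc act_eq_zero simp_thms cong: ball_cong bex_cong)
qed

lemma mcar_torsion_loc:
  assumes fin: "finite F" and F: "F \<subseteq> Collect (face Qp)"
  shows "mcar (torsion F (loc \<tau> M)) q =
    {loc_cls \<tau> M q t m | t m. t \<in> \<tau> \<and> m \<in> mcar (torsion F M) (q + t)}"
proof (intro set_eqI iffI)
  fix X assume X: "X \<in> mcar (torsion F (loc \<tau> M)) q"
  then obtain t m where t: "t \<in> \<tau>" and m: "m \<in> mcar M (q + t)" and X_eq: "X = loc_cls \<tau> M q t m"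
    unfolding torsion_simps loc_simps loc_car_def by blast
  have "\<forall>\<sigma>\<in>F. \<exists>u\<in>\<sigma>. \<exists>v\<in>\<tau>. mact M (u + v) (q + t) m = mzero M (q + t + (u + v))"
    using X loc_cls_mem_torsion_iff[OF F t m] unfolding X_eq by blast
  then obtain w where w: "w \<in> \<tau>" and tors: "mact M w (q + t) m \<in> mcar (torsion F M) (q + t + w)"
    using exists_act_in_torsion[OF fin F m] by blast
  have "X = loc_cls \<tau> M q (t + w) (mact M w (q + t) m)"
    unfolding X_eq loc_cls_act_eq[OF t w m] ..
  with face_add[OF \<tau> t w] tors[unfolded add.assoc]
  show "X \<in> {loc_cls \<tau> M q t m | t m. t \<in> \<tau> \<and> m \<in> mcar (torsion F M) (q + t)}"
    by blast
next
  fix X assume "X \<in> {loc_cls \<tau> M q t m | t m. t \<in> \<tau> \<and> m \<in> mcar (torsion F M) (q + t)}"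
  then obtain t m where t: "t \<in> \<tau>" and m: "m \<in> mcar (torsion F M) (q + t)" and X_eq: "X = loc_cls \<tau> M q t m"
    by blast
  have "\<exists>u\<in>\<sigma>. \<exists>v\<in>\<tau>. mact M (u + v) (q + t) m = mzero M (q + t + (u + v))" if \<sigma>: "\<sigma> \<in> F" for \<sigma>
  proof -
    obtain u where "u \<in> \<sigma>" "mact M u (q + t) m = mzero M (q + t + u)"
      using m \<sigma> by auto
    then show ?thesis
      using face_zero[OF \<tau>] by (intro bexI[of _ u] bexI[of _ 0]) simp_all
  qed
  then show "X \<in> mcar (torsion F (loc \<tau> M)) q"
    unfolding X_eq using loc_cls_mem_torsion_iff[OF F t] m by simp
qed

lemma bij_betw_loc_torsion:
  assumes "finite F" and "F \<subseteq> Collect (face Qp)"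
  shows "bij_betw (loc_map \<tau> M q) (mcar (loc \<tau> (torsion F M)) q) (mcar (torsion F (loc \<tau> M)) q)"
proof -
  have "mact (torsion F M) = mact M" and "\<And>p. mcar (torsion F M) p \<subseteq> mcar M p"
    by auto
  from bij_betw_loc_map[OF this] show ?thesis
    unfolding mcar_torsion_loc[OF assms] .
qed

lemma torsion_loc_trivial:
  assumes "\<tau> \<in> F" and "F \<subseteq> Collect (face Qp)"
  shows "mcar (torsion F (loc \<tau> M)) q = {mzero (loc \<tau> M) q}"
proof -
  have "X = mzero (loc \<tau> M) q" if X: "X \<in> mcar (torsion F (loc \<tau> M)) q" for X
  proof -
    obtain s where "X \<in> mcar (loc \<tau> M) q" "s \<in> \<tau>" "mact (loc \<tau> M) s q X = mzero (loc \<tau> M) (q + s)"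
      using X assms(1) unfolding torsion_simps mem_Collect_eq by blast
    then show ?thesis by (rule loc_act_eq_zero_imp_zero)
  qed
  then show ?thesis
    using graded_action.mzero_torsion[OF graded_action_loc assms(2)] by blast
qed

lemma loc_torsion_trivial:
  assumes "\<tau> \<in> F" and F: "F \<subseteq> Collect (face Qp)"
  shows "mcar (loc \<tau> (torsion F M)) q = {mzero (loc \<tau> (torsion F M)) q}"
proof (rule graded_action.loc_trivial_if_torsion[OF graded_action_torsion[OF F] \<tau>])
  show "\<exists>s\<in>\<tau>. mact (torsion F M) s p m = mzero (torsion F M) (p + s)"
    if "m \<in> mcar (torsion F M) p" for p m
    using that assms(1) unfolding torsion_simps mem_Collect_eq by blast
qed

end

lemma Gamma_eq_torsion: "Gamma Qp \<tau>' M = torsion {\<sigma>. face Qp \<sigma> \<and> \<not> \<sigma> \<subseteq> \<tau>'} M"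
proof -
  have "loc_cls \<sigma> M q 0 m = loc_cls \<sigma> M q 0 (mzero M q) \<longleftrightarrow> (\<exists>s\<in>\<sigma>. mact M s q m = mzero M (q + s))"
    if "face Qp \<sigma>" "m \<in> mcar M q" for \<sigma> q m
    using loc_cls_eq_zero_iff[OF that(1) face_zero[OF that(1)], of m q] that(2) by simp
  then show ?thesis
    unfolding Gamma_def torsion_def by (simp cong: conj_cong)
qed

end

theorem proposition4p6:
  fixes Qp :: "'q::ab_group_add set" and M :: "('q, 'k::field, 'v) qmod"
    and \<tau> \<tau>' :: "'q set"
  assumes "po_group Qp" and "polyhedral Qp" and "qmodule Qp M"
    and "face Qp \<tau>" and "face Qp \<tau>'"
  shows "(\<forall>q. bij_betw (loc_map \<tau> M q) (mcar (loc \<tau> (Gamma Qp \<tau>' M)) q)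
                                       (mcar (Gamma Qp \<tau>' (loc \<tau> M)) q))
       \<and> (\<not> \<tau> \<subseteq> \<tau>' \<longrightarrow>
            (\<forall>q. mcar (loc \<tau> (Gamma Qp \<tau>' M)) q = {mzero (loc \<tau> (Gamma Qp \<tau>' M)) q}
               \<and> mcar (Gamma Qp \<tau>' (loc \<tau> M)) q = {mzero (loc \<tau> M) q}))"
proof -
  interpret graded_action Qp M
    using assms(1,3) by (rule qmodule_graded_action)
  interpret loc: graded_action Qp "loc \<tau> M"
    using assms(4) by (rule graded_action_loc)
  define F where "F = {\<sigma>. face Qp \<sigma> \<and> \<not> \<sigma> \<subseteq> \<tau>'}"
  have faces: "F \<subseteq> Collect (face Qp)"
    unfolding F_def by blast
  with assms(2) have fin: "finite F"
    unfolding polyhedral_def by (rule finite_subset[rotated])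
  have \<tau>: "\<tau> \<in> F" if "\<not> \<tau> \<subseteq> \<tau>'"
    unfolding F_def using assms(4) that by blast
  show ?thesis
    unfolding Gamma_eq_torsion loc.Gamma_eq_torsion F_def[symmetric]
    using bij_betw_loc_torsion[OF assms(4) fin faces]
      loc_torsion_trivial[OF assms(4) \<tau> faces] torsion_loc_trivial[OF assms(4) \<tau> faces]
    by (auto simp del: loc_simps torsion_simps)
qed

end
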